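(* Let $\mathfrak{R}$ be a complete rewriting system on $\Sigma$ that is cyclically terminating. If there are no rules in $\mathfrak{R}$ with cyclical overlaps or cyclical inclusions, then $\mathfrak{R}$ is cyclically confluent.
   Context: $\Sigma^*$ is the free monoid on $\Sigma$; a rewriting system is a set of rules $l\to r$ with $l,r\in\Sigma^*$, complete meaning terminating and confluent; $plq\to prq$ is one rewriting step. $u\simeq v$ means $u=ab$, $v=ba$ for some words $a,b$ (cyclic conjugates). $u\rightsquigarrow v$ means some cyclic conjugate $\tilde u$ of $u$ (possibly $u$) satisfies $\tilde u\to v$; $\rightsquigarrow^*$ is its reflexive–transitive closure. $\mathfrak{R}$ is cyclically terminating if there is no infinite sequence $u_1\rightsquigarrow u_2\rightsquigarrow\cdots$, and cyclically confluent if whenever $w\rightsquigarrow^* u$ and $w\rightsquigarrow^* v$ there exist $z\simeq z'$ with $u\rightsquigarrow^* z$ and $v\rightsquigarrow^* z'$. There is a cyclical overlap between two rules if they have the form $xuy\to u'$ and $yvx\to v'$ with $u',v'$ words, $u,v,x,y$ non-empty words, and $u'v$, $v'u$ not cyclic conjugates. There is a cyclical inclusion between rules $l\to v$ and $l'\to v'$ if either $l'\simeq l$ and $v,v'$ are not cyclic conjugates, or $l'$ is a proper subword of a cyclic conjugate $\ell_1$ of $l$, written $\ell_1=ul'$ with $u$ non-empty, and $v$ and $uv'$ are not cyclic conjugates. *)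

theory Defs
  imports Main
begin

type_synonym 'a rsys = "('a list \<times> 'a list) set"

definition rstep :: "'a rsys \<Rightarrow> 'a list \<Rightarrow> 'a list \<Rightarrow> bool" where
  "rstep R u v \<longleftrightarrow> (\<exists>p q l r. (l, r) \<in> R \<and> u = p @ l @ q \<and> v = p @ r @ q)"

definition terminating :: "'a rsys \<Rightarrow> bool" where
  "terminating R \<longleftrightarrow> \<not> (\<exists>f. \<forall>i. rstep R (f i) (f (Suc i)))"

definition confluent :: "'a rsys \<Rightarrow> bool" where
  "confluent R \<longleftrightarrow> (\<forall>w u v. (rstep R)\<^sup>*\<^sup>* w u \<and> (rstep R)\<^sup>*\<^sup>* w v \<longrightarrow>
      (\<exists>z. (rstep R)\<^sup>*\<^sup>* u z \<and> (rstep R)\<^sup>*\<^sup>* v z))"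

definition complete :: "'a rsys \<Rightarrow> bool" where
  "complete R \<longleftrightarrow> terminating R \<and> confluent R"

definition cyc_conj :: "'a list \<Rightarrow> 'a list \<Rightarrow> bool" where
  "cyc_conj u v \<longleftrightarrow> (\<exists>a b. u = a @ b \<and> v = b @ a)"

definition cstep :: "'a rsys \<Rightarrow> 'a list \<Rightarrow> 'a list \<Rightarrow> bool" where
  "cstep R u v \<longleftrightarrow> (\<exists>u'. cyc_conj u u' \<and> rstep R u' v)"

definition cyc_terminating :: "'a rsys \<Rightarrow> bool" where
  "cyc_terminating R \<longleftrightarrow> \<not> (\<exists>f. \<forall>i. cstep R (f i) (f (Suc i)))"

definition cyc_confluent :: "'a rsys \<Rightarrow> bool" where
  "cyc_confluent R \<longleftrightarrow> (\<forall>w u v. (cstep R)\<^sup>*\<^sup>* w u \<and> (cstep R)\<^sup>*\<^sup>* w v \<longrightarrow>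
      (\<exists>z z'. cyc_conj z z' \<and> (cstep R)\<^sup>*\<^sup>* u z \<and> (cstep R)\<^sup>*\<^sup>* v z'))"

definition cyc_overlap :: "'a list \<times> 'a list \<Rightarrow> 'a list \<times> 'a list \<Rightarrow> bool" where
  "cyc_overlap r1 r2 \<longleftrightarrow> (\<exists>x u y v. x \<noteq> [] \<and> u \<noteq> [] \<and> y \<noteq> [] \<and> v \<noteq> [] \<and>
      fst r1 = x @ u @ y \<and> fst r2 = y @ v @ x \<and> \<not> cyc_conj (snd r1 @ v) (snd r2 @ u))"

definition cyc_inclusion :: "'a list \<times> 'a list \<Rightarrow> 'a list \<times> 'a list \<Rightarrow> bool" where
  "cyc_inclusion r1 r2 \<longleftrightarrow>
     (cyc_conj (fst r2) (fst r1) \<and> \<not> cyc_conj (snd r1) (snd r2)) \<or>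
     (\<exists>l1 u. cyc_conj (fst r1) l1 \<and> u \<noteq> [] \<and> l1 = u @ fst r2 \<and>
        \<not> cyc_conj (snd r1) (u @ snd r2))"

end

theory Submission
  imports Defs
begin

text \<open>
  Cyclic rewriting is ordinary rewriting modulo the equivalence of cyclic conjugation, and a step
  only depends on the conjugacy class of its source. For such systems Newman's lemma holds with
  joinability modulo the equivalence, so cyclic termination reduces cyclic confluence to local
  cyclic confluence. Two cyclic steps from one word are applications of rules \<open>l \<rightarrow> r\<close>,
  \<open>l' \<rightarrow> r'\<close> to rotations \<open>l s\<close>, \<open>l' s'\<close> of the same cyclic word. Either both redexes fit into
  one linear rotation, and ordinary confluence joins the results, or each redex wraps around the
  other; then the two rules form a cyclical inclusion (if \<open>s\<close> or \<open>s'\<close> is empty) or a cyclical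
  overlap, and the absence of these makes \<open>r s\<close> and \<open>r' s'\<close> cyclic conjugates.
\<close>

locale rewriting_modulo =
  fixes E :: "'a \<Rightarrow> 'a \<Rightarrow> bool" and S :: "'a \<Rightarrow> 'a \<Rightarrow> bool"
  assumes equivp: "equivp E"
    and step_cong_left: "E x y \<Longrightarrow> S y z \<Longrightarrow> S x z"
begin

definition joinable :: "'a \<Rightarrow> 'a \<Rightarrow> bool" where
  "joinable u v \<longleftrightarrow> (\<exists>z z'. E z z' \<and> S\<^sup>*\<^sup>* u z \<and> S\<^sup>*\<^sup>* v z')"

lemma E_refl: "E x x"
  using equivp by (rule equivp_reflp)

lemma E_sym: "E x y \<Longrightarrow> E y x"
  using equivp by (rule equivp_symp)

lemma E_trans: "E x y \<Longrightarrow> E y z \<Longrightarrow> E x z"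
  using equivp by (rule equivp_transp)

lemma steps_cong:
  assumes "E x y" and "S\<^sup>*\<^sup>* x x'"
  shows "\<exists>y'. S\<^sup>*\<^sup>* y y' \<and> E y' x'"
  using assms(2)
proof (cases rule: converse_rtranclpE)
  case base
  then show ?thesis using assms(1) E_sym by blast
next
  case (step x1)
  then have "S y x1" using step_cong_left E_sym assms(1) by blast
  then show ?thesis using step E_refl by (meson converse_rtranclp_into_rtranclp)
qed

lemma joinable_if_E: "E u v \<Longrightarrow> joinable u v"
  unfolding joinable_def by blast

lemma joinable_sym: "joinable u v \<Longrightarrow> joinable v u"
  unfolding joinable_def using E_sym by blast

lemma joinable_cong_left:
  assumes "joinable u v" and "E u u'"
  shows "joinable u' v"
proof -
  obtain z z' where z: "E z z'" "S\<^sup>*\<^sup>* u z" "S\<^sup>*\<^sup>* v z'"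
    using assms(1) unfolding joinable_def by blast
  obtain y where "S\<^sup>*\<^sup>* u' y" "E y z"
    using steps_cong[OF assms(2) z(2)] by blast
  then show ?thesis unfolding joinable_def using z E_trans by blast
qed

lemma joinable_cong: "joinable u v \<Longrightarrow> E u u' \<Longrightarrow> E v v' \<Longrightarrow> joinable u' v'"
  by (meson joinable_cong_left joinable_sym)

lemma newman:
  assumes wf: "wf {(y, x). S x y}"
    and local_joinable: "\<And>w u v. S w u \<Longrightarrow> S w v \<Longrightarrow> joinable u v"
  shows "S\<^sup>*\<^sup>* w u \<Longrightarrow> S\<^sup>*\<^sup>* w v \<Longrightarrow> joinable u v"
  using wf
proof (induction w arbitrary: u v rule: wf_induct_rule)
  case (less w)
  show ?case
  proof (cases "u = w \<or> v = w")
    case True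
    then show ?thesis using less.prems E_refl unfolding joinable_def by blast
  next
    case False
    obtain u1 where u1: "S w u1" "S\<^sup>*\<^sup>* u1 u"
      using less.prems(1) False by (metis converse_rtranclpE)
    obtain v1 where v1: "S w v1" "S\<^sup>*\<^sup>* v1 v"
      using less.prems(2) False by (metis converse_rtranclpE)
    obtain z1 z1' where z1: "E z1 z1'" "S\<^sup>*\<^sup>* u1 z1" "S\<^sup>*\<^sup>* v1 z1'"
      using local_joinable[OF u1(1) v1(1)] unfolding joinable_def by blast
    have "joinable u z1'"
      using less.IH[OF _ u1(2) z1(2)] u1(1) z1(1) E_refl joinable_cong by blast
    then obtain a b where ab: "E a b" "S\<^sup>*\<^sup>* u a" "S\<^sup>*\<^sup>* z1' b"
      unfolding joinable_def by blast
    have "S\<^sup>*\<^sup>* v1 b"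
      using z1(3) ab(3) by (rule rtranclp_trans)
    then have "joinable v b"
      using less.IH[OF _ v1(2)] v1(1) by blast
    then obtain c c' where cc: "E c c'" "S\<^sup>*\<^sup>* v c" "S\<^sup>*\<^sup>* b c'"
      unfolding joinable_def by blast
    obtain c'' where "S\<^sup>*\<^sup>* a c''" "E c'' c'"
      using steps_cong[OF E_sym[OF ab(1)] cc(3)] by blast
    then show ?thesis
      unfolding joinable_def using ab(2) cc(1,2) E_sym E_trans by (meson rtranclp_trans)
  qed
qed

end

lemma cyc_conj_iff_rotate: "cyc_conj u v \<longleftrightarrow> (\<exists>n. v = rotate n u)"
proof
  assume "cyc_conj u v"
  then obtain a b where "u = a @ b" "v = b @ a" unfolding cyc_conj_def by blast
  then show "\<exists>n. v = rotate n u" using rotate_append[of a b] by metis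
next
  assume "\<exists>n. v = rotate n u"
  then show "cyc_conj u v" unfolding cyc_conj_def rotate_drop_take
    by (metis append_take_drop_id)
qed

lemma cyc_conj_append_swap: "cyc_conj (a @ b) (b @ a)"
  unfolding cyc_conj_def by blast

lemma equivp_cyc_conj: "equivp cyc_conj"
proof (rule equivpI)
  show "reflp cyc_conj"
    by (rule reflpI) (metis cyc_conj_append_swap append_Nil append_Nil2)
  show "symp cyc_conj"
    by (rule sympI) (auto simp: cyc_conj_def)
  show "transp cyc_conj"
    by (rule transpI) (metis cyc_conj_iff_rotate rotate_rotate)
qed

lemma cstep_cong_left: "cyc_conj x y \<Longrightarrow> cstep R y z \<Longrightarrow> cstep R x z"
  unfolding cstep_def using equivp_cyc_conj by (meson equivp_transp)

interpretation cyclic: rewriting_modulo cyc_conj "cstep R"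
  by unfold_locales (fact equivp_cyc_conj, fact cstep_cong_left)

lemma cyc_confluent_iff_joinable:
  "cyc_confluent R \<longleftrightarrow>
     (\<forall>w u v. (cstep R)\<^sup>*\<^sup>* w u \<longrightarrow> (cstep R)\<^sup>*\<^sup>* w v \<longrightarrow> cyclic.joinable R u v)"
  unfolding cyc_confluent_def cyclic.joinable_def by blast

lemma rsteps_imp_csteps:
  assumes "(rstep R)\<^sup>*\<^sup>* u v"
  shows "(cstep R)\<^sup>*\<^sup>* u v"
proof -
  have "rstep R \<le> cstep R"
    unfolding cstep_def using cyclic.E_refl by blast
  then show ?thesis
    using assms rtranclp_mono by blast
qed

lemma cstep_cases:
  assumes "cstep R w u"
  obtains l r s where "(l, r) \<in> R" "cyc_conj w (l @ s)" "cyc_conj u (r @ s)"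
proof -
  obtain w' p l q r where "cyc_conj w w'" "(l, r) \<in> R" "w' = p @ l @ q" "u = p @ r @ q"
    using assms unfolding cstep_def rstep_def by blast
  moreover have "cyc_conj (p @ l @ q) (l @ (q @ p))" "cyc_conj (p @ r @ q) (r @ (q @ p))"
    using cyc_conj_append_swap[of p "l @ q"] cyc_conj_append_swap[of p "r @ q"] by simp_all
  ultimately show thesis using that cyclic.E_trans by blast
qed

lemma cyclic_joinable_if_common_rotation:
  assumes "confluent R" and "(l, r) \<in> R" and "(l', r') \<in> R"
    and "l @ s = a @ b" and "l' @ s' = b @ a" and "length l \<le> length a"
  shows "cyclic.joinable R (r @ s) (r' @ s')"
proof -
  obtain m where m: "a = l @ m" "s = m @ b"
    using assms(4,6) by (auto simp: append_eq_append_conv2)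
  have "rstep R (b @ l @ m) (b @ r @ m)"
    unfolding rstep_def using assms(2) by blast
  moreover have "rstep R (b @ l @ m) ([] @ r' @ s')"
    unfolding rstep_def using assms(3,5) m by (metis append_Nil append_assoc)
  ultimately obtain z where "(rstep R)\<^sup>*\<^sup>* (b @ r @ m) z" "(rstep R)\<^sup>*\<^sup>* (r' @ s') z"
    using assms(1) unfolding confluent_def by (metis append_Nil r_into_rtranclp)
  then have "cyclic.joinable R (b @ r @ m) (r' @ s')"
    unfolding cyclic.joinable_def using cyclic.E_refl rsteps_imp_csteps by blast
  moreover have "cyc_conj (b @ r @ m) (r @ s)"
    using m cyc_conj_append_swap[of b "r @ m"] by simp
  ultimately show ?thesis using cyclic.joinable_cong cyclic.E_refl by blast
qed

lemma cyc_conj_rhs_if_no_cyc_inclusion: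
  assumes "\<not> cyc_inclusion (l, r) (l', r')" and "cyc_conj l (u @ l')"
  shows "cyc_conj r (u @ r')"
proof (cases "u = []")
  case True
  then show ?thesis using assms unfolding cyc_inclusion_def by (auto intro: cyclic.E_sym)
next
  case False
  then show ?thesis using assms unfolding cyc_inclusion_def by auto
qed

lemma cyc_conj_rhs_of_wrapping_redexes:
  assumes "\<not> cyc_overlap (l, r) (l', r')"
    and "\<not> cyc_inclusion (l, r) (l', r')" and "\<not> cyc_inclusion (l', r') (l, r)"
    and l: "l = d @ s' @ c" and l': "l' = c @ s @ d" and "c \<noteq> []" and "d \<noteq> []"
  shows "cyc_conj (r @ s) (r' @ s')"
proof -
  consider "s = []" | "s' = []" | "s \<noteq> []" "s' \<noteq> []" by blast
  then show ?thesis
  proof cases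
    case 1
    have "cyc_conj l (s' @ l')"
      using l l' 1 cyc_conj_append_swap[of d "s' @ c"] by simp
    then have "cyc_conj r (s' @ r')"
      using assms(2) cyc_conj_rhs_if_no_cyc_inclusion by blast
    then show ?thesis
      using 1 cyc_conj_append_swap[of s' r'] cyclic.E_trans by auto
  next
    case 2
    have "cyc_conj l' (s @ l)"
      using l l' 2 cyc_conj_append_swap[of c "s @ d"] by simp
    then have "cyc_conj r' (s @ r)"
      using assms(3) cyc_conj_rhs_if_no_cyc_inclusion by blast
    then show ?thesis
      using 2 cyc_conj_append_swap[of r s] cyclic.E_trans cyclic.E_sym by (metis append_Nil2)
  next
    case 3
    then show ?thesis
      using assms(1) l l' \<open>c \<noteq> []\<close> \<open>d \<noteq> []\<close> unfolding cyc_overlap_def fst_conv snd_conv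
      by blast
  qed
qed

lemma cyclic_joinable_rotated_redexes:
  assumes "confluent R"
    and no_overlap: "\<forall>r1\<in>R. \<forall>r2\<in>R. \<not> cyc_overlap r1 r2"
    and no_inclusion: "\<forall>r1\<in>R. \<forall>r2\<in>R. \<not> cyc_inclusion r1 r2"
    and rules: "(l, r) \<in> R" "(l', r') \<in> R"
    and ab: "l @ s = a @ b" "l' @ s' = b @ a"
  shows "cyclic.joinable R (r @ s) (r' @ s')"
proof -
  consider "length l \<le> length a" | "length l' \<le> length b"
    | "length a < length l" "length b < length l'" by linarith
  then show ?thesis
  proof cases
    case 1
    then show ?thesis using assms(1) rules ab cyclic_joinable_if_common_rotation by blast
  next
    case 2
    then show ?thesis
      using assms(1) rules ab cyclic_joinable_if_common_rotation cyclic.joinable_sym by blast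
  next
    case 3
    obtain c where c: "l = a @ c" "b = c @ s" "c \<noteq> []"
      using ab(1) 3(1) by (auto simp: append_eq_append_conv2)
    obtain d where d: "l' = b @ d" "a = d @ s'" "d \<noteq> []"
      using ab(2) 3(2) by (auto simp: append_eq_append_conv2)
    have "cyc_conj (r @ s) (r' @ s')"
      using cyc_conj_rhs_of_wrapping_redexes[of l r l' r' d s' c s] no_overlap no_inclusion
        rules c d by simp
    then show ?thesis by (rule cyclic.joinable_if_E)
  qed
qed

lemma cstep_locally_cyclic_joinable:
  assumes "confluent R"
    and "\<forall>r1\<in>R. \<forall>r2\<in>R. \<not> cyc_overlap r1 r2"
    and "\<forall>r1\<in>R. \<forall>r2\<in>R. \<not> cyc_inclusion r1 r2"
    and "cstep R w u" and "cstep R w v"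
  shows "cyclic.joinable R u v"
proof -
  obtain l r s where 1: "(l, r) \<in> R" "cyc_conj w (l @ s)" "cyc_conj u (r @ s)"
    using assms(4) by (rule cstep_cases)
  obtain l' r' s' where 2: "(l', r') \<in> R" "cyc_conj w (l' @ s')" "cyc_conj v (r' @ s')"
    using assms(5) by (rule cstep_cases)
  have "cyc_conj (l @ s) (l' @ s')"
    using 1(2) 2(2) cyclic.E_sym cyclic.E_trans by blast
  then obtain a b where "l @ s = a @ b" "l' @ s' = b @ a"
    unfolding cyc_conj_def by blast
  then have "cyclic.joinable R (r @ s) (r' @ s')"
    using cyclic_joinable_rotated_redexes assms(1-3) 1(1) 2(1) by blast
  then show ?thesis
    using 1(3) 2(3) cyclic.E_sym cyclic.joinable_cong by blast
qed

theorem theorem5p9: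
  fixes R :: "'a rsys"
  assumes "complete R"
    and "cyc_terminating R"
    and "\<forall>r1\<in>R. \<forall>r2\<in>R. \<not> cyc_overlap r1 r2"
    and "\<forall>r1\<in>R. \<forall>r2\<in>R. \<not> cyc_inclusion r1 r2"
  shows "cyc_confluent R"
proof -
  have wf: "wf {(y, x). cstep R x y}"
    using assms(2) unfolding cyc_terminating_def wf_iff_no_infinite_down_chain by auto
  have "confluent R"
    using assms(1) unfolding complete_def by blast
  then have "\<And>w u v. cstep R w u \<Longrightarrow> cstep R w v \<Longrightarrow> cyclic.joinable R u v"
    using cstep_locally_cyclic_joinable assms(3,4) by blast
  then show ?thesis
    unfolding cyc_confluent_iff_joinable using cyclic.newman[OF wf] by blast
qed

end
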